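(* Let $d\ge 3$ be an integer and $\beta>0$. For real numbers $\mu_{++},\rho_+$ set $\rho_-=1-\rho_+$, $\mu_{+-}=\rho_+-\mu_{++}$, $\mu_{--}=1+\mu_{++}-2\rho_+$, let $\mathcal{Q}=\{(\mu_{++},\rho_+):\mu_{++}>0,\mu_{+-}>0,\mu_{--}>0\}$ and \[ \psi(\mu_{++},\rho_+)=-\rho_+\log\rho_+-\rho_-\log\rho_- -\frac d2\left(\mu_{++}\log\frac{\mu_{++}}{\rho_+^2}+\mu_{--}\log\frac{\mu_{--}}{\rho_-^2}+2\mu_{+-}\log\frac{\mu_{+-}}{\rho_+\rho_-}+\beta(1+2\mu_{++}-2\rho_+)\right). \] Then \[ \max_{(\mu_{++},\rho_+)\in\mathcal{Q}}\psi(\mu_{++},\rho_+)=\psi\left(\frac{e^{-\beta}}{2(1+e^{-\beta})},\frac12\right)=\left(1-\frac d2\right)\log 2+\frac d2\log(1+e^{-\beta}). \] *)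

theory Defs
  imports "HOL-Analysis.Analysis"
begin

definition Qdom :: "(real \<times> real) set" where
  "Qdom = {(m, r). m > 0 \<and> r - m > 0 \<and> 1 + m - 2 * r > 0}"

definition psi :: "nat \<Rightarrow> real \<Rightarrow> real \<Rightarrow> real \<Rightarrow> real" where
  "psi d \<beta> m r =
    (let rm = 1 - r; mpm = r - m; mmm = 1 + m - 2 * r in
     - r * ln r - rm * ln rm
     - (real d / 2) * (m * ln (m / r^2) + mmm * ln (mmm / rm^2)
                        + 2 * mpm * ln (mpm / (r * rm)) + \<beta> * (1 + 2 * m - 2 * r)))"

end

theory Submission
  imports Defs
begin

text \<open>
  Put \<open>g = 1 - 1/d\<close>, \<open>t = e\<^sup>-\<^sup>\<beta>\<close>, \<open>a = \<rho>\<^sub>+\<^sup>g\<close>, \<open>b = \<rho>\<^sub>-\<^sup>g\<close>. Since \<open>\<rho>\<^sub>+ = \<mu>\<^sub>+\<^sub>+ + \<mu>\<^sub>+\<^sub>-\<close> and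
  \<open>\<rho>\<^sub>- = \<mu>\<^sub>-\<^sub>- + \<mu>\<^sub>+\<^sub>-\<close>, the entropy terms can be absorbed into the logarithms, and \<open>\<psi>\<close> becomes
  \<open>d/2\<close> times a sum \<open>\<Sum> w\<^sub>i ln (Y\<^sub>i / w\<^sub>i)\<close> with weights \<open>(\<mu>\<^sub>+\<^sub>+, \<mu>\<^sub>-\<^sub>-, 2\<mu>\<^sub>+\<^sub>-)\<close> of total mass 1
  and \<open>Y = (t a\<^sup>2, t b\<^sup>2, 2ab)\<close>. Jensen's inequality for \<open>ln\<close> bounds this by
  \<open>ln (t a\<^sup>2 + t b\<^sup>2 + 2ab) \<le> ln ((1 + t)/2 (a + b)\<^sup>2)\<close>, where \<open>t \<le> 1\<close> is used, and concavity of
  \<open>x \<mapsto> x\<^sup>g\<close> gives \<open>a + b \<le> 2\<^sup>1\<^sup>/\<^sup>d\<close>. At the claimed maximizer all three ratios \<open>Y\<^sub>i / w\<^sub>i\<close>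
  coincide, so Jensen's inequality is an equality there.
\<close>

lemma sum_ln_ratio_le_ln_sum:
  fixes w Y :: "'a \<Rightarrow> real"
  assumes "finite S" "sum w S = 1" "\<And>i. i \<in> S \<Longrightarrow> w i > 0" "\<And>i. i \<in> S \<Longrightarrow> Y i > 0"
  shows "(\<Sum>i\<in>S. w i * ln (Y i / w i)) \<le> ln (\<Sum>i\<in>S. Y i)"
proof -
  have "S \<noteq> {}" using assms(2) by auto
  then have "(\<Sum>i\<in>S. w i * ln (Y i / w i)) \<le> ln (\<Sum>i\<in>S. w i *\<^sub>R (Y i / w i))"
    using assms by (intro concave_on_sum[OF assms(1) _ ln_concave]) (auto intro: less_imp_le)
  also have "(\<Sum>i\<in>S. w i *\<^sub>R (Y i / w i)) = (\<Sum>i\<in>S. Y i)"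
    using assms(3) by (intro sum.cong) (auto simp: less_imp_neq[symmetric])
  finally show ?thesis .
qed

lemma powr_add_powr_le:
  fixes x y g :: real
  assumes "x > 0" "y > 0" "0 \<le> g" "g \<le> 1"
  shows "x powr g + y powr g \<le> 2 powr (1 - g) * (x + y) powr g"
proof -
  define u where "u = (x + y) / 2"
  have u: "u > 0" using assms by (simp add: u_def)
  have u_sum: "x / u + y / u = 2"
    using u by (simp add: add_divide_distrib[symmetric] u_def field_simps)
  have "(x / u) powr g + (y / u) powr g \<le> (g * (x / u) + (1 - g)) + (g * (y / u) + (1 - g))"
    using Youngs_inequality_0[of g "1 - g" "x / u" 1] Youngs_inequality_0[of g "1 - g" "y / u" 1]
      assms u by (intro add_mono) auto
  also have "\<dots> = g * (x / u + y / u) + 2 * (1 - g)" by (simp add: algebra_simps)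
  also have "\<dots> = 2" using u_sum by simp
  finally have "x powr g + y powr g \<le> 2 * u powr g"
    using assms u by (simp add: powr_divide add_divide_distrib[symmetric] field_simps)
  also have "\<dots> = 2 powr (1 - g) * (x + y) powr g"
    using assms by (simp add: u_def powr_divide powr_diff)
  finally show ?thesis .
qed

lemma weighted_sq_sum_le_sq_add:
  fixes a b t :: real
  assumes "t \<le> 1"
  shows "t * a\<^sup>2 + t * b\<^sup>2 + 2 * (a * b) \<le> (1 + t) / 2 * (a + b)\<^sup>2"
proof -
  have "(1 + t) / 2 * (a + b)\<^sup>2 - (t * a\<^sup>2 + t * b\<^sup>2 + 2 * (a * b)) = (1 - t) / 2 * (a - b)\<^sup>2"
    by (simp add: power2_eq_square field_simps)
  moreover have "0 \<le> (1 - t) / 2 * (a - b)\<^sup>2" using assms by simp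
  ultimately show ?thesis by linarith
qed

lemma psi_eq_weighted_ln_ratio:
  assumes "(m, r) \<in> Qdom" "d > 0"
  defines "g \<equiv> 1 - 1 / real d" and "q \<equiv> 1 - r" and "n \<equiv> 1 + m - 2 * r" and "p \<equiv> r - m"
  shows "psi d \<beta> m r = real d / 2 *
    (m * ln (exp (-\<beta>) * r powr (2 * g) / m) + n * ln (exp (-\<beta>) * q powr (2 * g) / n)
     + 2 * p * ln ((r * q) powr g / p))"
proof -
  have pos: "m > 0" "n > 0" "p > 0" "r > 0" "q > 0"
    using assms(1) by (auto simp: Qdom_def n_def p_def q_def)
  have "psi d \<beta> m r = - r * ln r - q * ln q - real d / 2 * (m * (ln m - 2 * ln r)
      + n * (ln n - 2 * ln q) + 2 * p * (ln p - ln r - ln q) + \<beta> * (m + n))"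
    using pos unfolding psi_def Let_def q_def[symmetric] n_def[symmetric] p_def[symmetric]
    by (simp add: ln_div ln_mult ln_realpow n_def algebra_simps)
  also have "\<dots> = real d / 2 * (m * (- \<beta> + 2 * g * ln r - ln m) + n * (- \<beta> + 2 * g * ln q - ln n)
      + 2 * p * (g * ln r + g * ln q - ln p))"
  proof -
    have "real d * g = real d - 1" "r = m + p" "q = n + p"
      using assms(2) by (simp_all add: g_def n_def p_def q_def field_simps)
    then show ?thesis by algebra
  qed
  also have "\<dots> = real d / 2 *
    (m * ln (exp (-\<beta>) * r powr (2 * g) / m) + n * ln (exp (-\<beta>) * q powr (2 * g) / n)
     + 2 * p * ln ((r * q) powr g / p))"
    using pos by (simp add: ln_div ln_mult ln_powr distrib_left)
  finally show ?thesis .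
qed

lemma maximizer_in_Qdom: "(exp (-\<beta>) / (2 * (1 + exp (-\<beta>))), 1/2) \<in> Qdom"
proof -
  have "exp (-\<beta>) > 0" by simp
  then show ?thesis by (simp add: Qdom_def field_simps add_pos_pos)
qed

lemma psi_le_max_value:
  assumes "(m, r) \<in> Qdom" "d > 0" "\<beta> \<ge> 0"
  shows "psi d \<beta> m r \<le> (1 - real d / 2) * ln 2 + real d / 2 * ln (1 + exp (-\<beta>))"
proof -
  define g where "g = 1 - 1 / real d"
  define t where "t = exp (-\<beta>)"
  define q where "q = 1 - r"
  define n where "n = 1 + m - 2 * r"
  define p where "p = r - m"
  define a where "a = r powr g"
  define b where "b = q powr g"
  have pos: "m > 0" "n > 0" "p > 0" "r > 0" "q > 0"
    using assms(1) by (auto simp: Qdom_def n_def p_def q_def)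
  have g: "0 \<le> g" "g \<le> 1" "1 - g = 1 / real d" using assms(2) by (auto simp: g_def)
  have t: "0 < t" "t \<le> 1" using assms(3) by (auto simp: t_def)
  have ab: "a > 0" "b > 0" using pos by (auto simp: a_def b_def)
  have "psi d \<beta> m r = real d / 2 * (m * ln (t * a\<^sup>2 / m) + n * ln (t * b\<^sup>2 / n) + 2 * p * ln (a * b / p))"
    using psi_eq_weighted_ln_ratio[OF assms(1,2), of \<beta>] pos
    by (simp add: g_def t_def q_def n_def p_def a_def b_def powr_mult power2_eq_square powr_add[symmetric])
  also have "\<dots> \<le> real d / 2 * ln (t * a\<^sup>2 + t * b\<^sup>2 + 2 * (a * b))"
  proof (intro mult_left_mono)
    define w where "w = (\<lambda>i :: nat. [m, n, 2 * p] ! i)"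
    define Y where "Y = (\<lambda>i :: nat. [t * a\<^sup>2, t * b\<^sup>2, 2 * (a * b)] ! i)"
    have "(\<Sum>i\<in>{0, 1, 2}. w i * ln (Y i / w i)) \<le> ln (\<Sum>i\<in>{0, 1, 2}. Y i)"
      by (rule sum_ln_ratio_le_ln_sum) (use pos t ab in \<open>auto simp: w_def Y_def n_def p_def\<close>)
    then show "m * ln (t * a\<^sup>2 / m) + n * ln (t * b\<^sup>2 / n) + 2 * p * ln (a * b / p)
        \<le> ln (t * a\<^sup>2 + t * b\<^sup>2 + 2 * (a * b))"
      by (simp add: w_def Y_def add.assoc)
  qed simp
  also have "\<dots> \<le> real d / 2 * ln ((1 + t) / 2 * (a + b)\<^sup>2)"
  proof (intro mult_left_mono)
    have "0 < t * a\<^sup>2 + t * b\<^sup>2 + 2 * (a * b)" using t ab by (intro add_pos_pos) auto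
    then show "ln (t * a\<^sup>2 + t * b\<^sup>2 + 2 * (a * b)) \<le> ln ((1 + t) / 2 * (a + b)\<^sup>2)"
      using weighted_sq_sum_le_sq_add[OF t(2), of a b] by simp
  qed simp
  also have "\<dots> \<le> real d / 2 * ln ((1 + t) / 2 * (2 powr (1 / real d))\<^sup>2)"
  proof (intro mult_left_mono)
    have "a + b \<le> 2 powr (1 / real d)"
      using powr_add_powr_le[of r q g] pos g by (simp add: a_def b_def q_def)
    then have "(a + b)\<^sup>2 \<le> (2 powr (1 / real d))\<^sup>2" using ab by (intro power_mono) auto
    moreover have "0 < (a + b)\<^sup>2" using ab by simp
    ultimately show "ln ((1 + t) / 2 * (a + b)\<^sup>2) \<le> ln ((1 + t) / 2 * (2 powr (1 / real d))\<^sup>2)"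
      using t by simp
  qed simp
  also have "\<dots> = (1 - real d / 2) * ln 2 + real d / 2 * ln (1 + exp (-\<beta>))"
  proof -
    have "ln ((1 + t) / 2 * (2 powr (1 / real d))\<^sup>2) = ln (1 + t) - ln 2 + 2 / real d * ln 2"
      using t by (simp add: ln_mult ln_div ln_realpow ln_powr)
    then show ?thesis using assms(2) by (simp add: t_def field_simps)
  qed
  finally show ?thesis .
qed

lemma psi_maximizer_value:
  assumes "d > 0"
  shows "psi d \<beta> (exp (-\<beta>) / (2 * (1 + exp (-\<beta>)))) (1/2)
    = (1 - real d / 2) * ln 2 + real d / 2 * ln (1 + exp (-\<beta>))"
proof -
  define t where "t = exp (-\<beta>)"
  define g where "g = 1 - 1 / real d"
  define m where "m = t / (2 * (1 + t))"
  define K where "K = 2 * (1 + t) * (1/2) powr (2 * g)"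
  have t: "t > 0" "1 + t > 0" by (simp_all add: t_def add_pos_pos)
  have half: "1 + m - 2 * (1/2) = m" "1 - 1/2 = (1/2 :: real)" by simp_all
  have ratio: "t * (1/2) powr (2 * g) / m = K"
    using t by (simp add: m_def K_def field_simps)
  have "(1/2 * (1/2)) powr g = (1/2 :: real) powr g * (1/2) powr g" by (rule powr_mult)
  also have "\<dots> = (1/2) powr (2 * g)" by (simp only: mult_2 powr_add)
  moreover have "1/2 - m = 1 / (2 * (1 + t))" using t by (simp add: m_def field_simps)
  ultimately have ratio': "(1/2 * (1/2)) powr g / (1/2 - m) = K"
    by (simp add: K_def)
  have "psi d \<beta> m (1/2) = real d / 2 * ((m + m + 2 * (1/2 - m)) * ln K)"
    using psi_eq_weighted_ln_ratio[OF maximizer_in_Qdom[of \<beta>] assms, where \<beta> = \<beta>]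
    unfolding t_def[symmetric] m_def[symmetric] g_def[symmetric] half ratio ratio'
    by (simp add: algebra_simps)
  also have "m + m + 2 * (1/2 - m) = 1" by simp
  also have "ln K = ln (1 + t) + (2 / real d - 1) * ln 2"
  proof -
    have "ln K = ln (2 * (1 + t)) + ln ((1/2) powr (2 * g))"
      unfolding K_def using t by (simp add: ln_mult)
    also have "\<dots> = ln 2 + ln (1 + t) - 2 * g * ln 2"
      using t by (simp add: ln_mult_pos ln_powr ln_div del: distrib_left_numeral)
    finally show ?thesis by (simp add: g_def algebra_simps)
  qed
  also have "real d / 2 * (1 * (ln (1 + t) + (2 / real d - 1) * ln 2))
      = (1 - real d / 2) * ln 2 + real d / 2 * ln (1 + t)"
    using assms by (simp add: field_simps)
  finally show ?thesis by (simp add: t_def m_def)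
qed

theorem corollary6p6:
  fixes d :: nat and \<beta> :: real
  assumes "d \<ge> 3" and "\<beta> > 0"
  shows "(exp (-\<beta>) / (2 * (1 + exp (-\<beta>))), 1/2) \<in> Qdom
    \<and> (\<forall>(m, r) \<in> Qdom. psi d \<beta> m r \<le> psi d \<beta> (exp (-\<beta>) / (2 * (1 + exp (-\<beta>)))) (1/2))
    \<and> psi d \<beta> (exp (-\<beta>) / (2 * (1 + exp (-\<beta>)))) (1/2)
        = (1 - real d / 2) * ln 2 + (real d / 2) * ln (1 + exp (-\<beta>))"
proof -
  have "d > 0" "\<beta> \<ge> 0" using assms by simp_all
  then show ?thesis
    using maximizer_in_Qdom psi_le_max_value psi_maximizer_value by auto
qed

end
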